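(* Let $f:E_A^{\mathbb N}\to\mathbb R$ be a strongly regular Hölder-type function, $\delta>0$ with $P(\delta f)=0$, and fix $\rho\in E_A^{\mathbb N}$. Define, for $T>0$, $$m(T):=\sup\{|\omega|:\omega\in E^*_\rho,\ S_{|\omega'|}f(\omega'\rho)\ge -T\ \text{for all }\omega'\in E^*_\rho\text{ with }|\omega'|\le|\omega|\},$$ $$M(T):=\sup\{|\omega|:\omega\in E^*_\rho,\ S_{|\omega|}f(\omega\rho)\ge -T\},$$ with the convention $\sup\emptyset=-\infty$. Then both limits $\lim_{T\to\infty}m(T)/T$ and $\lim_{T\to\infty}M(T)/T$ exist (in the extended real line).
   Context: $E$ is a countable set, $A:E\times E\to\{0,1\}$, $E_A^{\mathbb N}$ the set of sequences $\rho$ with $A_{\rho_i\rho_{i+1}}=1$ for all $i$, $E_A^n$ the admissible words of length $n$, $E_A^*=\bigcup_{n\ge1}E_A^n$. The subshift is finitely irreducible: there is a finite set $\Omega$ of words such that for all $e,e'\in E$ some $\omega\in\Omega$ makes $e\omega e'$ admissible. $E^*_\rho=\{\omega\in E_A^*:\omega\rho \text{ admissible}\}$. $\sigma$ is the shift, $S_nf=\sum_{j<n}f\circ\sigma^j$, $[\omega]$ the cylinder of sequences beginning with $\omega$. $|\rho\wedge\rho'|$ is the length of the common initial block; for $\alpha>0$, $V_\alpha(f)=\sup_{n\ge1}\sup\{|f(\rho)-f(\rho')|e^{\alpha(n-1)}:|\rho\wedge\rho'|\ge n\}$, and $f$ is Hölder-type if $V_\alpha(f)<\infty$. $P(g)=\lim_n\frac1n\log\sum_{\omega\in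 E_A^n}\exp(\sup_{[\omega]}S_ng)$; a real $g$ is summable if $\sum_e\exp(\sup_{[e]}g)<\infty$. $f$ is strongly regular if $P(xf)=0$ for some $x>0$ and $0<P(xf)<\infty$ for some $x>0$. *)

theory Defs
  imports "HOL-Analysis.Analysis"
begin

text \<open>The alphabet E is a countable type 'e; the incidence matrix is A :: 'e => 'e => bool.
  Sequences are functions nat => 'e, finite words are lists.\<close>

definition adm_seq :: "('e \<Rightarrow> 'e \<Rightarrow> bool) \<Rightarrow> (nat \<Rightarrow> 'e) \<Rightarrow> bool" where
  "adm_seq A \<rho> \<longleftrightarrow> (\<forall>i. A (\<rho> i) (\<rho> (Suc i)))"

definition adm_word :: "('e \<Rightarrow> 'e \<Rightarrow> bool) \<Rightarrow> 'e list \<Rightarrow> bool" where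
  "adm_word A w \<longleftrightarrow> (\<forall>i. Suc i < length w \<longrightarrow> A (w ! i) (w ! Suc i))"

definition words :: "('e \<Rightarrow> 'e \<Rightarrow> bool) \<Rightarrow> nat \<Rightarrow> 'e list set" where
  "words A n = {w. length w = n \<and> adm_word A w}"

definition words_star :: "('e \<Rightarrow> 'e \<Rightarrow> bool) \<Rightarrow> 'e list set" where
  "words_star A = {w. w \<noteq> [] \<and> adm_word A w}"

definition finitely_irreducible :: "('e \<Rightarrow> 'e \<Rightarrow> bool) \<Rightarrow> bool" where
  "finitely_irreducible A \<longleftrightarrow>
     (\<exists>\<Omega>. finite \<Omega> \<and> (\<forall>e e'. \<exists>\<omega>\<in>\<Omega>. adm_word A (e # \<omega> @ [e'])))"

definition cat :: "'e list \<Rightarrow> (nat \<Rightarrow> 'e) \<Rightarrow> (nat \<Rightarrow> 'e)" where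
  "cat w \<rho> = (\<lambda>i. if i < length w then w ! i else \<rho> (i - length w))"

definition shift :: "(nat \<Rightarrow> 'e) \<Rightarrow> (nat \<Rightarrow> 'e)" where
  "shift \<rho> = (\<lambda>i. \<rho> (Suc i))"

definition birk_sum :: "((nat \<Rightarrow> 'e) \<Rightarrow> real) \<Rightarrow> nat \<Rightarrow> (nat \<Rightarrow> 'e) \<Rightarrow> real" where
  "birk_sum f n \<rho> = (\<Sum>j<n. f ((shift ^^ j) \<rho>))"

definition cyl :: "('e \<Rightarrow> 'e \<Rightarrow> bool) \<Rightarrow> 'e list \<Rightarrow> (nat \<Rightarrow> 'e) set" where
  "cyl A w = {\<rho>. adm_seq A \<rho> \<and> (\<forall>i<length w. \<rho> i = w ! i)}"

definition words_before :: "('e \<Rightarrow> 'e \<Rightarrow> bool) \<Rightarrow> (nat \<Rightarrow> 'e) \<Rightarrow> 'e list set" where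
  "words_before A \<rho> = {w \<in> words_star A. adm_seq A (cat w \<rho>)}"

definition holder_type :: "('e \<Rightarrow> 'e \<Rightarrow> bool) \<Rightarrow> ((nat \<Rightarrow> 'e) \<Rightarrow> real) \<Rightarrow> bool" where
  "holder_type A f \<longleftrightarrow> (\<exists>\<alpha>>0. \<exists>C. \<forall>n\<ge>1. \<forall>\<rho> \<rho>'. adm_seq A \<rho> \<and> adm_seq A \<rho>' \<and>
       (\<forall>i<n. \<rho> i = \<rho>' i) \<longrightarrow> \<bar>f \<rho> - f \<rho>'\<bar> * exp (\<alpha> * (real n - 1)) \<le> C)"

definition ln_enn :: "ennreal \<Rightarrow> ereal" where
  "ln_enn z = (if z = \<infinity> then \<infinity> else if z = 0 then -\<infinity> else ereal (ln (enn2real z)))"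

definition part_fun :: "('e \<Rightarrow> 'e \<Rightarrow> bool) \<Rightarrow> ((nat \<Rightarrow> 'e) \<Rightarrow> real) \<Rightarrow> nat \<Rightarrow> ennreal" where
  "part_fun A g n = (\<Sum>\<^sub>\<infinity> w \<in> words A n.
      ennreal (exp (SUP \<rho>\<in>cyl A w. birk_sum g n \<rho>)))"

definition pressure :: "('e \<Rightarrow> 'e \<Rightarrow> bool) \<Rightarrow> ((nat \<Rightarrow> 'e) \<Rightarrow> real) \<Rightarrow> ereal" where
  "pressure A g = lim (\<lambda>n. ln_enn (part_fun A g n) / ereal (real n))"

definition strongly_regular :: "('e \<Rightarrow> 'e \<Rightarrow> bool) \<Rightarrow> ((nat \<Rightarrow> 'e) \<Rightarrow> real) \<Rightarrow> bool" where
  "strongly_regular A f \<longleftrightarrow>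
     (\<exists>x>0. pressure A (\<lambda>\<rho>. x * f \<rho>) = 0) \<and>
     (\<exists>x>0. 0 < pressure A (\<lambda>\<rho>. x * f \<rho>) \<and> pressure A (\<lambda>\<rho>. x * f \<rho>) < \<infinity>)"

definition m_fun :: "('e \<Rightarrow> 'e \<Rightarrow> bool) \<Rightarrow> ((nat \<Rightarrow> 'e) \<Rightarrow> real) \<Rightarrow> (nat \<Rightarrow> 'e) \<Rightarrow> real \<Rightarrow> ereal" where
  "m_fun A f \<rho> T = Sup {ereal (real (length w)) | w. w \<in> words_before A \<rho> \<and>
      (\<forall>w'\<in>words_before A \<rho>. length w' \<le> length w \<longrightarrow>
          birk_sum f (length w') (cat w' \<rho>) \<ge> - T)}"

definition M_fun :: "('e \<Rightarrow> 'e \<Rightarrow> bool) \<Rightarrow> ((nat \<Rightarrow> 'e) \<Rightarrow> real) \<Rightarrow> (nat \<Rightarrow> 'e) \<Rightarrow> real \<Rightarrow> ereal" where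
  "M_fun A f \<rho> T = Sup {ereal (real (length w)) | w. w \<in> words_before A \<rho> \<and>
      birk_sum f (length w) (cat w \<rho>) \<ge> - T}"

end

theory Submission
  imports Defs
begin

text \<open>
  Everything rests on a replication property of the words in E^*_rho. By finite irreducibility
  every such word w can be closed into a loop w c with a connecting word c from a fixed finite
  set, and the repetition (w c)^(q-1) w again lies in E^*_rho; by bounded distortion of
  Hoelder-type potentials its length lies between q|w| and q(|w| + K) and its Birkhoff sum is
  within q D of q S(w). For M this shows liminf M(T)/T >= M(T0)/(T0 + D) for every T0, and for m
  a single word of length n with sum below -T0 forces m(T) <= ceil(T/(T0 - D)) (n + K); either
  way liminf and limsup of the ratio agree in the extended reals.
\<close>

lemma tendsto_exists_if_frequently_gt_imp_eventually_gt:
  fixes \<phi> :: "'a \<Rightarrow> 'b::{complete_linorder, dense_linorder, linorder_topology}"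
  assumes "F \<noteq> bot"
    and persist: "\<And>y b. y < b \<Longrightarrow> frequently (\<lambda>x. b < \<phi> x) F \<Longrightarrow> eventually (\<lambda>x. y < \<phi> x) F"
  shows "\<exists>L. (\<phi> \<longlongrightarrow> L) F"
proof -
  have "Limsup F \<phi> \<le> Liminf F \<phi>"
  proof (rule dense_le)
    fix b assume "b < Limsup F \<phi>"
    then obtain c where "b < c" "\<not> eventually (\<lambda>x. \<phi> x < c) F"
      unfolding not_le[symmetric] Limsup_le_iff by auto
    then have "frequently (\<lambda>x. b < \<phi> x) F"
      unfolding not_eventually by (auto elim: frequently_elim1)
    then show "b \<le> Liminf F \<phi>"
      unfolding le_Liminf_iff using persist by blast
  qed
  then show ?thesis
    using Liminf_le_Limsup[OF \<open>F \<noteq> bot\<close>, of \<phi>] tendsto_iff_Liminf_eq_Limsup[OF \<open>F \<noteq> bot\<close>, of \<phi>]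
    by (metis order_antisym)
qed

lemma tendsto_exists_if_frequently_lt_imp_eventually_lt:
  fixes \<phi> :: "'a \<Rightarrow> 'b::{complete_linorder, dense_linorder, linorder_topology}"
  assumes "F \<noteq> bot"
    and persist: "\<And>y b. y < b \<Longrightarrow> frequently (\<lambda>x. \<phi> x < y) F \<Longrightarrow> eventually (\<lambda>x. \<phi> x < b) F"
  shows "\<exists>L. (\<phi> \<longlongrightarrow> L) F"
proof -
  have "Limsup F \<phi> \<le> Liminf F \<phi>"
  proof (rule dense_ge)
    fix y assume "Liminf F \<phi> < y"
    then obtain c where "c < y" "\<not> eventually (\<lambda>x. c < \<phi> x) F"
      unfolding not_le[symmetric] le_Liminf_iff by auto
    then have "frequently (\<lambda>x. \<phi> x < y) F"
      unfolding not_eventually by (auto elim: frequently_elim1)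
    then show "Limsup F \<phi> \<le> y"
      unfolding Limsup_le_iff using persist by blast
  qed
  then show ?thesis
    using Liminf_le_Limsup[OF \<open>F \<noteq> bot\<close>, of \<phi>] tendsto_iff_Liminf_eq_Limsup[OF \<open>F \<noteq> bot\<close>, of \<phi>]
    by (metis order_antisym)
qed

lemma eventually_ratio_gt_if_linear_lower_bound:
  fixes \<phi> :: "real \<Rightarrow> ereal"
  assumes "0 < E" and "y < a / E" and lower: "\<And>T. E \<le> T \<Longrightarrow> ereal ((T / E - 1) * a) \<le> \<phi> T"
  shows "eventually (\<lambda>T. ereal y < \<phi> T / ereal T) at_top"
proof -
  have "eventually (\<lambda>T. E \<le> T \<and> a / (a / E - y) < T) at_top"
    by (intro eventually_conj eventually_ge_at_top eventually_gt_at_top)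
  then show ?thesis
  proof eventually_elim
    case (elim T)
    then have "T * y < (T / E - 1) * a"
      using assms(1,2) by (simp add: field_simps)
    then have "ereal T * ereal y < ereal ((T / E - 1) * a)"
      by simp
    also have "\<dots> \<le> \<phi> T"
      using lower elim by blast
    finally show ?case
      using elim \<open>0 < E\<close> by (subst ereal_less_divide_pos) auto
  qed
qed

lemma eventually_ratio_lt_if_linear_upper_bound:
  fixes \<phi> :: "real \<Rightarrow> ereal"
  assumes "1 \<le> E" and "0 < c" and "c / E < b"
    and upper: "\<And>T. 0 < T \<Longrightarrow> \<phi> T \<le> ereal (of_int \<lceil>T / E\<rceil> * c)"
  shows "eventually (\<lambda>T. \<phi> T / ereal T < ereal b) at_top"
proof -
  have "eventually (\<lambda>T. 0 < T \<and> c / (b - c / E) < T) at_top"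
    by (intro eventually_conj eventually_gt_at_top)
  then show ?thesis
  proof eventually_elim
    case (elim T)
    have "\<phi> T \<le> ereal (of_int \<lceil>T / E\<rceil> * c)"
      using upper elim by blast
    also have "of_int \<lceil>T / E\<rceil> * c < (T / E + 1) * c"
      using \<open>0 < c\<close> by (intro mult_strict_right_mono) linarith+
    also have "(T / E + 1) * c < T * b"
      using elim assms(1,3) by (simp add: field_simps)
    finally show ?case
      using elim by (subst ereal_divide_less_pos) (auto simp: mult.commute)
  qed
qed

lemma ratio_at_top_converges_if_lower_bounds:
  fixes \<phi> :: "real \<Rightarrow> ereal" and D :: real
  assumes "0 \<le> D"
    and nonneg: "eventually (\<lambda>T. 0 \<le> \<phi> T) at_top"
    and lower: "\<And>T0 a T. 0 < T0 \<Longrightarrow> 0 \<le> a \<Longrightarrow> ereal a < \<phi> T0 \<Longrightarrow> T0 + D \<le> T \<Longrightarrow>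
                  ereal ((T / (T0 + D) - 1) * a) \<le> \<phi> T"
  shows "\<exists>L. ((\<lambda>T. \<phi> T / ereal T) \<longlongrightarrow> L) at_top"
proof (rule tendsto_exists_if_frequently_gt_imp_eventually_gt, simp)
  fix y b :: ereal
  assume "y < b" and above: "frequently (\<lambda>T. b < \<phi> T / ereal T) at_top"
  show "eventually (\<lambda>T. y < \<phi> T / ereal T) at_top"
  proof (cases "y < 0")
    case True
    show ?thesis
      using nonneg eventually_gt_at_top[of 0]
      by eventually_elim (use True in \<open>auto simp: ereal_le_divide_pos intro: less_le_trans\<close>)
  next
    case False
    then obtain yr b' where y: "y = ereal yr" "0 \<le> yr" "yr < b'" "ereal b' < b"
      using ereal_dense2[OF \<open>y < b\<close>] \<open>y < b\<close> by (cases y) auto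
    have "frequently (\<lambda>T. ereal b' < \<phi> T / ereal T) at_top"
      using above by (rule frequently_elim1) (use y in auto)
    \<comment> \<open>the lower bound of T0 makes T0 b' / (T0 + D) exceed yr\<close>
    from frequently_eventually_frequently[OF this eventually_ge_at_top]
    have "frequently (\<lambda>T. ereal b' < \<phi> T / ereal T \<and> max 1 (yr * D / (b' - yr) + 1) \<le> T) at_top" .
    then obtain T0 where T0: "ereal b' < \<phi> T0 / ereal T0" "max 1 (yr * D / (b' - yr) + 1) \<le> T0"
      by (auto dest: frequently_ex)
    define a where "a = T0 * b'"
    define E where "E = T0 + D"
    have "0 < T0" "0 \<le> a" using T0(2) y unfolding a_def by auto
    have "ereal a < \<phi> T0"
      using T0(1) \<open>0 < T0\<close> unfolding a_def by (simp add: ereal_less_divide_pos mult.commute)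
    have "yr * D / (b' - yr) < T0"
      using T0(2) by simp
    then have "yr * D < T0 * (b' - yr)"
      using y by (simp add: pos_divide_less_eq mult.commute)
    then have "yr < a / E" and "0 < E"
      using \<open>0 < T0\<close> \<open>0 \<le> D\<close> y unfolding a_def E_def by (auto simp: field_simps)
    have "ereal ((T / E - 1) * a) \<le> \<phi> T" if "E \<le> T" for T
      using lower \<open>0 < T0\<close> \<open>0 \<le> a\<close> \<open>ereal a < \<phi> T0\<close> that unfolding E_def by blast
    with \<open>0 < E\<close> \<open>yr < a / E\<close> show ?thesis
      unfolding y(1) by (rule eventually_ratio_gt_if_linear_lower_bound)
  qed
qed

lemma minf_if_mono_and_frequently_negative:
  fixes \<phi> :: "real \<Rightarrow> ereal"
  assumes "frequently (\<lambda>T. \<phi> T / ereal T < 0) at_top" and "mono \<phi>"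
    and negative: "\<And>T. \<phi> T < 0 \<Longrightarrow> \<phi> T = -\<infinity>"
  shows "\<phi> T = -\<infinity>"
proof -
  obtain T0 where T0: "\<phi> T0 / ereal T0 < 0" "max 1 T \<le> T0"
    using frequently_eventually_frequently[OF assms(1) eventually_ge_at_top[of "max 1 T"]]
    by (auto dest: frequently_ex)
  have "\<phi> T0 < 0"
  proof (rule ccontr)
    assume "\<not> \<phi> T0 < 0"
    then have "0 \<le> \<phi> T0 / ereal T0"
      using T0(2) by (subst ereal_le_divide_pos) auto
    with T0(1) show False
      by simp
  qed
  moreover have "\<phi> T \<le> \<phi> T0"
    using monoD[OF \<open>mono \<phi>\<close>, of T T0] T0(2) by simp
  ultimately show ?thesis
    using negative by (meson le_less_trans)
qed

lemma ratio_at_top_converges_if_upper_bounds: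
  fixes \<phi> :: "real \<Rightarrow> ereal" and D :: real and K :: nat
  assumes "0 \<le> D" and "mono \<phi>"
    and negative: "\<And>T. \<phi> T < 0 \<Longrightarrow> \<phi> T = -\<infinity>"
    and upper: "\<And>T0 n T. D < T0 \<Longrightarrow> 1 \<le> n \<Longrightarrow> \<phi> T0 < ereal (real n) \<Longrightarrow> 0 < T \<Longrightarrow>
                  \<phi> T \<le> ereal (of_int \<lceil>T / (T0 - D)\<rceil> * (real n + real K))"
  shows "\<exists>L. ((\<lambda>T. \<phi> T / ereal T) \<longlongrightarrow> L) at_top"
proof (rule tendsto_exists_if_frequently_lt_imp_eventually_lt, simp)
  fix y b :: ereal
  assume "y < b" and below: "frequently (\<lambda>T. \<phi> T / ereal T < y) at_top"
  show "eventually (\<lambda>T. \<phi> T / ereal T < b) at_top"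
  proof (cases "y \<le> 0")
    case True
    have "frequently (\<lambda>T. \<phi> T / ereal T < 0) at_top"
      using below by (rule frequently_elim1) (use True in auto)
    then have minf: "\<phi> T = -\<infinity>" for T
      using \<open>mono \<phi>\<close> negative by (rule minf_if_mono_and_frequently_negative)
    show ?thesis
      using eventually_gt_at_top[of 0] by (rule eventually_mono) (use \<open>y < b\<close> in \<open>auto simp: minf\<close>)
  next
    case False
    then obtain yr b' where y: "y = ereal yr" "0 < yr" "yr < b'" "ereal b' < b"
      using ereal_dense2[OF \<open>y < b\<close>] \<open>y < b\<close> by (cases y) auto
    \<comment> \<open>the lower bound of T0 makes (n + K) / (T0 - D) less than b' for the least integer n > yr T0\<close>
    have "frequently (\<lambda>T. \<phi> T / ereal T < y \<and> max (D + 1) ((1 + K + b' * D) / (b' - yr) + 1) \<le> T) at_top"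
      using frequently_eventually_frequently[OF below eventually_ge_at_top] .
    then obtain T0 where T0: "\<phi> T0 / ereal T0 < y" "max (D + 1) ((1 + K + b' * D) / (b' - yr) + 1) \<le> T0"
      by (auto dest: frequently_ex)
    have "0 < T0"
      using T0(2) \<open>0 \<le> D\<close> by simp
    define n where "n = nat \<lfloor>yr * T0\<rfloor> + 1"
    have "1 \<le> n" "yr * T0 < n" "n \<le> yr * T0 + 1"
      unfolding n_def using y \<open>0 < T0\<close> by (simp_all add: of_nat_nat) linarith
    have "\<phi> T0 < ereal (T0 * yr)"
      using T0(1) \<open>0 < T0\<close> y by (subst (asm) ereal_divide_less_pos) (auto simp: mult.commute)
    also have "\<dots> < ereal n"
      using \<open>yr * T0 < n\<close> by (simp add: mult.commute)
    finally have "\<phi> T0 < ereal n" .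
    define E where "E = T0 - D"
    define c where "c = real n + real K"
    have "1 \<le> E" "0 < c" using T0(2) unfolding E_def c_def n_def by auto
    have "(1 + K + b' * D) / (b' - yr) < T0"
      using T0(2) by simp
    then have "1 + K + b' * D < T0 * (b' - yr)"
      using y by (simp add: pos_divide_less_eq mult.commute)
    then have "c / E < b'"
      using \<open>n \<le> yr * T0 + 1\<close> \<open>1 \<le> E\<close> unfolding c_def E_def by (simp add: field_simps)
    have "\<phi> T \<le> ereal (of_int \<lceil>T / E\<rceil> * c)" if "0 < T" for T
      using upper T0(2) \<open>1 \<le> n\<close> \<open>\<phi> T0 < ereal n\<close> that unfolding E_def c_def by simp
    with \<open>1 \<le> E\<close> \<open>0 < c\<close> \<open>c / E < b'\<close>
    have "eventually (\<lambda>T. \<phi> T / ereal T < ereal b') at_top"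
      by (rule eventually_ratio_lt_if_linear_upper_bound)
    then show ?thesis
      by (rule eventually_mono) (use y(4) in \<open>blast intro: less_trans\<close>)
  qed
qed

text \<open>W, len and S abstract E^*_rho, the word length and w \<mapsto> S_|w| f(w rho); M and m are the
  functions of the theorem.\<close>

locale replicable_words =
  fixes W :: "'w set" and len :: "'w \<Rightarrow> nat" and S :: "'w \<Rightarrow> real" and D :: real and K :: nat
  assumes lengths_exist: "1 \<le> n \<Longrightarrow> \<exists>w\<in>W. len w = n"
    and D_nonneg: "0 \<le> D"
    and replicate: "w \<in> W \<Longrightarrow> 1 \<le> q \<Longrightarrow> \<exists>w'\<in>W. q * len w \<le> len w' \<and> len w' \<le> q * (len w + K) \<and>
                      \<bar>S w' - real q * S w\<bar> \<le> real q * D"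
begin

definition M :: "real \<Rightarrow> ereal" where
  "M T = Sup {ereal (real (len w)) | w. w \<in> W \<and> S w \<ge> - T}"

definition m :: "real \<Rightarrow> ereal" where
  "m T = Sup {ereal (real (len w)) | w. w \<in> W \<and> (\<forall>w'\<in>W. len w' \<le> len w \<longrightarrow> S w' \<ge> - T)}"

lemma len_le_M: "w \<in> W \<Longrightarrow> - T \<le> S w \<Longrightarrow> ereal (real (len w)) \<le> M T"
  unfolding M_def by (rule Sup_upper) auto

lemma M_eventually_nonneg: "eventually (\<lambda>T. 0 \<le> M T) at_top"
proof -
  obtain w where "w \<in> W"
    using lengths_exist[of 1] by auto
  show ?thesis
    using eventually_ge_at_top[of "- S w"]
  proof (rule eventually_mono)
    fix T assume "- S w \<le> T"
    then have "ereal (real (len w)) \<le> M T"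
      using len_le_M[OF \<open>w \<in> W\<close>] by simp
    then show "0 \<le> M T"
      by (rule order.trans[rotated]) simp
  qed
qed

lemma M_lower_bound:
  assumes "0 < T0" "0 \<le> a" "ereal a < M T0" "T0 + D \<le> T"
  shows "ereal ((T / (T0 + D) - 1) * a) \<le> M T"
proof -
  obtain w where w: "w \<in> W" "- T0 \<le> S w" "a < len w"
    using \<open>ereal a < M T0\<close> unfolding M_def less_Sup_iff by auto
  define E where "E = T0 + D"
  define q where "q = nat \<lfloor>T / E\<rfloor>"
  have "0 < E" "1 \<le> T / E"
    using assms D_nonneg unfolding E_def by auto
  then have q: "real q = of_int \<lfloor>T / E\<rfloor>"
    unfolding q_def by (simp add: of_nat_nat)
  then have "1 \<le> q" "real q \<le> T / E" "T / E - 1 < q"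
    using \<open>1 \<le> T / E\<close> floor_correct[of "T / E"] by (auto simp: one_le_floor) linarith
  then have "real q * E \<le> T"
    using \<open>0 < E\<close> by (simp add: le_divide_eq)
  obtain w' where w': "w' \<in> W" "q * len w \<le> len w'" "\<bar>S w' - real q * S w\<bar> \<le> real q * D"
    using replicate[OF w(1) \<open>1 \<le> q\<close>] by blast
  have "- T \<le> real q * (- T0) - real q * D"
    using \<open>real q * E \<le> T\<close> unfolding E_def by (simp add: algebra_simps)
  also have "\<dots> \<le> real q * S w - real q * D"
    using mult_left_mono[OF w(2), of "real q"] by simp
  also have "\<dots> \<le> S w'"
    using w'(3) by (simp add: abs_le_iff)
  finally have "ereal (real (len w')) \<le> M T"
    using len_le_M[OF w'(1)] by blast
  moreover have "(T / E - 1) * a \<le> real q * len w"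
    using \<open>T / E - 1 < q\<close> \<open>0 \<le> a\<close> w(3) by (intro mult_mono) auto
  moreover have "real q * len w \<le> len w'"
    using w'(2) by (metis of_nat_le_iff of_nat_mult)
  ultimately have "ereal ((T / E - 1) * a) \<le> ereal (real (len w'))"
    by simp
  then show ?thesis
    using \<open>ereal (real (len w')) \<le> M T\<close> unfolding E_def by (rule order.trans)
qed

lemma m_mono: "mono m"
proof (rule monoI)
  fix T T' :: real
  assume "T \<le> T'"
  then have "- T \<le> s \<Longrightarrow> - T' \<le> s" for s
    by linarith
  then show "m T \<le> m T'"
    unfolding m_def by (intro Sup_subset_mono) blast
qed

lemma m_eq_minf_if_neg:
  assumes "m T < 0"
  shows "m T = -\<infinity>"
proof -
  have "m T < ereal (real (len w))" for w
    using assms by (rule less_le_trans) simp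
  then have "\<not> ereal (real (len w)) \<le> m T" for w
    by (simp add: not_le)
  then have "{ereal (real (len w)) | w. w \<in> W \<and> (\<forall>w'\<in>W. len w' \<le> len w \<longrightarrow> S w' \<ge> - T)} = {}"
    unfolding m_def by (blast intro: Sup_upper)
  then show ?thesis
    unfolding m_def by (metis Sup_empty bot_ereal_def)
qed

lemma m_le_len_if_sum_less:
  assumes "u \<in> W" "S u < - T"
  shows "m T \<le> ereal (real (len u))"
  unfolding m_def
proof (rule Sup_least)
  fix x assume "x \<in> {ereal (real (len w)) | w. w \<in> W \<and> (\<forall>w'\<in>W. len w' \<le> len w \<longrightarrow> S w' \<ge> - T)}"
  then obtain w where w: "x = ereal (real (len w))" "\<forall>w'\<in>W. len w' \<le> len w \<longrightarrow> S w' \<ge> - T"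
    by blast
  have "len w < len u"
  proof (rule ccontr)
    assume "\<not> len w < len u"
    then have "- T \<le> S u"
      using w(2) assms(1) by simp
    with assms(2) show False
      by simp
  qed
  then show "x \<le> ereal (real (len u))"
    using w(1) by simp
qed

lemma short_word_with_sum_less_if_m_less:
  assumes "1 \<le> n" "m T < ereal (real n)"
  obtains u where "u \<in> W" "len u \<le> n" "S u < - T"
proof -
  obtain w where w: "w \<in> W" "len w = n"
    using lengths_exist[OF \<open>1 \<le> n\<close>] by blast
  have "\<not> ereal (real (len w)) \<le> m T"
    using assms(2) w(2) by simp
  have "\<not> (\<forall>w'\<in>W. len w' \<le> len w \<longrightarrow> S w' \<ge> - T)"
  proof
    assume "\<forall>w'\<in>W. len w' \<le> len w \<longrightarrow> S w' \<ge> - T"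
    then have "ereal (real (len w)) \<le> m T"
      unfolding m_def using w(1) by (intro Sup_upper) blast
    with \<open>\<not> ereal (real (len w)) \<le> m T\<close> show False
      by contradiction
  qed
  then obtain u where "u \<in> W" "len u \<le> len w" "S u < - T"
    by (auto simp: not_le)
  then show ?thesis
    using that w(2) by simp
qed

lemma m_upper_bound:
  assumes "D < T0" "1 \<le> n" "m T0 < ereal (real n)" "0 < T"
  shows "m T \<le> ereal (of_int \<lceil>T / (T0 - D)\<rceil> * (real n + real K))"
proof -
  obtain u where u: "u \<in> W" "len u \<le> n" "S u < - T0"
    using short_word_with_sum_less_if_m_less[OF assms(2,3)] .
  define E where "E = T0 - D"
  define q where "q = nat \<lceil>T / E\<rceil>"
  have "0 < T / E"
    using assms unfolding E_def by simp
  then have q: "real q = of_int \<lceil>T / E\<rceil>"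
    unfolding q_def by (simp add: of_nat_nat)
  then have "T / E \<le> real q"
    by simp
  then have "T \<le> real q * E"
    using assms(1) unfolding E_def by (simp add: divide_le_eq)
  have "1 \<le> q"
    using \<open>0 < T / E\<close> \<open>T / E \<le> real q\<close> by linarith
  obtain u' where u': "u' \<in> W" "len u' \<le> q * (len u + K)" "\<bar>S u' - real q * S u\<bar> \<le> real q * D"
    using replicate[OF u(1) \<open>1 \<le> q\<close>] by blast
  have "S u' \<le> real q * S u + real q * D"
    using u'(3) by (simp add: abs_le_iff)
  also have "\<dots> < real q * (- T0) + real q * D"
    using mult_strict_left_mono[OF u(3), of "real q"] \<open>1 \<le> q\<close> by simp
  also have "\<dots> \<le> - T"
    using \<open>T \<le> real q * E\<close> unfolding E_def by (simp add: algebra_simps)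
  finally have "m T \<le> ereal (real (len u'))"
    by (rule m_le_len_if_sum_less[OF u'(1)])
  also have "\<dots> \<le> ereal (real q * (real n + real K))"
  proof -
    have "len u' \<le> q * (n + K)"
      using u'(2) u(2) by (meson add_le_mono1 le_trans mult_le_mono2)
    then show ?thesis
      by (metis ereal_less_eq(3) of_nat_add of_nat_le_iff of_nat_mult)
  qed
  finally show ?thesis
    using q unfolding E_def by simp
qed

theorem M_ratio_converges: "\<exists>L. ((\<lambda>T. M T / ereal T) \<longlongrightarrow> L) at_top"
  by (rule ratio_at_top_converges_if_lower_bounds[OF D_nonneg M_eventually_nonneg M_lower_bound])

theorem m_ratio_converges: "\<exists>L. ((\<lambda>T. m T / ereal T) \<longlongrightarrow> L) at_top"
  by (rule ratio_at_top_converges_if_upper_bounds[OF D_nonneg m_mono m_eq_minf_if_neg m_upper_bound])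

end

lemma adm_word_iff_successively: "adm_word A w \<longleftrightarrow> successively A w"
  unfolding adm_word_def successively_conv_nth ..

lemma cat_Nil [simp]: "cat [] x = x"
  by (simp add: cat_def)

lemma cat_append: "cat (u @ v) x = cat u (cat v x)"
  by (auto simp: cat_def fun_eq_iff nth_append)

lemma cat_nth: "i < length u \<Longrightarrow> cat u x i = u ! i"
  by (simp add: cat_def)

lemma cat_0: "cat u x 0 = hd (u @ [x 0])"
  by (cases u) (auto simp: cat_def)

lemma shift_cat_Cons [simp]: "shift (cat (a # u) x) = cat u x"
  by (auto simp: shift_def cat_def fun_eq_iff)

lemma shift_funpow_apply: "(shift ^^ j) x i = x (i + j)"
  by (induction j arbitrary: x) (auto simp: funpow_Suc_right shift_def simp del: funpow.simps)

lemma shift_funpow_cat: "(shift ^^ length u) (cat u x) = x"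
  by (induction u) (auto simp: funpow_Suc_right simp del: funpow.simps)

lemma adm_seq_shift_funpow: "adm_seq A x \<Longrightarrow> adm_seq A ((shift ^^ j) x)"
  unfolding adm_seq_def shift_funpow_apply by simp

lemma adm_seq_Cons: "adm_seq A x \<longleftrightarrow> A (x 0) (x 1) \<and> adm_seq A (shift x)"
  unfolding adm_seq_def shift_def by (metis One_nat_def not0_implies_Suc)

lemma adm_seq_cat_iff: "adm_seq A (cat u x) \<longleftrightarrow> successively A (u @ [x 0]) \<and> adm_seq A x"
proof (induction u)
  case Nil
  show ?case
    by simp
next
  case (Cons a u)
  have "cat (a # u) x 1 = cat u x 0"
    using shift_cat_Cons[of a u x] unfolding shift_def by (metis One_nat_def)
  then have "adm_seq A (cat (a # u) x) \<longleftrightarrow> A a (cat u x 0) \<and> adm_seq A (cat u x)"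
    using adm_seq_Cons[of A "cat (a # u) x"] by (simp add: cat_nth)
  then show ?case
    using Cons.IH by (simp add: successively_Cons cat_0)
qed

lemma words_before_iff: "w \<in> words_before A \<rho> \<longleftrightarrow> w \<noteq> [] \<and> adm_seq A (cat w \<rho>)"
  unfolding words_before_def words_star_def adm_word_iff_successively adm_seq_cat_iff
  by (auto simp: successively_append_iff)

lemma birk_sum_add: "birk_sum f (m + n) x = birk_sum f m x + birk_sum f n ((shift ^^ m) x)"
proof (induction n)
  case 0
  show ?case
    by (simp add: birk_sum_def)
next
  case (Suc n)
  have "(shift ^^ (m + n)) x = (shift ^^ n) ((shift ^^ m) x)"
    by (metis add.commute comp_apply funpow_add)
  then show ?case
    using Suc by (simp add: birk_sum_def)
qed

definition word_sum :: "((nat \<Rightarrow> 'e) \<Rightarrow> real) \<Rightarrow> (nat \<Rightarrow> 'e) \<Rightarrow> 'e list \<Rightarrow> real" where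
  "word_sum f \<rho> w = birk_sum f (length w) (cat w \<rho>)"

lemma word_sum_append:
  "word_sum f \<rho> (u @ v) = birk_sum f (length u) (cat u (cat v \<rho>)) + word_sum f \<rho> v"
  unfolding word_sum_def cat_append length_append birk_sum_add shift_funpow_cat ..

definition bounded_distortion :: "('e \<Rightarrow> 'e \<Rightarrow> bool) \<Rightarrow> ((nat \<Rightarrow> 'e) \<Rightarrow> real) \<Rightarrow> real \<Rightarrow> bool" where
  "bounded_distortion A f Dh \<longleftrightarrow> (\<forall>n x y. adm_seq A x \<longrightarrow> adm_seq A y \<longrightarrow> (\<forall>i<n. x i = y i) \<longrightarrow>
     \<bar>birk_sum f n x - birk_sum f n y\<bar> \<le> Dh)"

lemma holder_type_bounded_distortion:
  assumes "holder_type A f"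
  shows "\<exists>Dh. bounded_distortion A f Dh"
proof -
  obtain \<alpha> C where "0 < \<alpha>" and holder: "\<forall>n\<ge>1. \<forall>x y. adm_seq A x \<and> adm_seq A y \<and> (\<forall>i<n. x i = y i) \<longrightarrow>
       \<bar>f x - f y\<bar> * exp (\<alpha> * (real n - 1)) \<le> C"
    using assms unfolding holder_type_def by blast
  define r where "r = exp (- \<alpha>)"
  have r: "0 < r" "r < 1"
    unfolding r_def using \<open>0 < \<alpha>\<close> by auto
  have "\<bar>birk_sum f n x - birk_sum f n y\<bar> \<le> C / (1 - r)"
    if x: "adm_seq A x" and y: "adm_seq A y" and agree: "\<forall>i<n. x i = y i" for n x y
  proof -
    have "0 \<le> C"
      using holder[rule_format, of 1 x x] x by simp
    have term_bound: "\<bar>f ((shift ^^ j) x) - f ((shift ^^ j) y)\<bar> \<le> C * r ^ (n - Suc j)" if "j < n" for j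
    proof -
      have "\<bar>f ((shift ^^ j) x) - f ((shift ^^ j) y)\<bar> * exp (\<alpha> * (real (n - j) - 1)) \<le> C"
        using holder[rule_format, of "n - j" "(shift ^^ j) x" "(shift ^^ j) y"] that agree
        by (simp add: adm_seq_shift_funpow x y shift_funpow_apply)
      moreover have "exp (\<alpha> * (real (n - j) - 1)) = exp (real (n - Suc j) * \<alpha>)"
        using that by (simp add: of_nat_diff mult.commute)
      also have "\<dots> = 1 / r ^ (n - Suc j)"
        unfolding exp_of_nat_mult r_def by (simp add: exp_minus power_inverse divide_inverse)
      ultimately show ?thesis
        using r by (simp add: divide_le_eq mult.commute)
    qed
    have "\<bar>birk_sum f n x - birk_sum f n y\<bar> \<le> (\<Sum>j<n. \<bar>f ((shift ^^ j) x) - f ((shift ^^ j) y)\<bar>)"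
      unfolding birk_sum_def sum_subtractf[symmetric] by (rule sum_abs)
    also have "\<dots> \<le> (\<Sum>j<n. C * r ^ (n - Suc j))"
      by (rule sum_mono) (use term_bound in auto)
    also have "\<dots> = C * (\<Sum>j<n. r ^ j)"
      by (subst sum.nat_diff_reindex) (simp add: sum_distrib_left)
    also have "\<dots> = C * ((1 - r ^ n) / (1 - r))"
      using r by (simp add: sum_gp_strict)
    also have "\<dots> \<le> C / (1 - r)"
      using r \<open>0 \<le> C\<close> by (simp add: mult_left_le divide_right_mono)
    finally show ?thesis .
  qed
  then show ?thesis
    unfolding bounded_distortion_def by blast
qed

lemma holder_type_bounded_on_letters:
  assumes "holder_type A f" and "finite L"
  obtains B where "0 \<le> B" and "\<And>x. adm_seq A x \<Longrightarrow> x 0 \<in> L \<Longrightarrow> \<bar>f x\<bar> \<le> B"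
proof -
  obtain \<alpha> C where holder: "\<forall>n\<ge>1. \<forall>x y. adm_seq A x \<and> adm_seq A y \<and> (\<forall>i<n. x i = y i) \<longrightarrow>
       \<bar>f x - f y\<bar> * exp (\<alpha> * (real n - 1)) \<le> C"
    using assms(1) unfolding holder_type_def by blast
  have oscillation: "\<bar>f x - f y\<bar> \<le> C" if "adm_seq A x" "adm_seq A y" "x 0 = y 0" for x y
    using holder[rule_format, of 1 x y] that by simp
  define pick where "pick e = (SOME x. adm_seq A x \<and> x 0 = e)" for e
  define B where "B = (\<Sum>e\<in>L. \<bar>f (pick e)\<bar>) + \<bar>C\<bar>"
  have "\<bar>f x\<bar> \<le> B" if x: "adm_seq A x" "x 0 \<in> L" for x
  proof -
    have "\<exists>z. adm_seq A z \<and> z 0 = x 0"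
      using x(1) by blast
    then have "adm_seq A (pick (x 0)) \<and> pick (x 0) 0 = x 0"
      unfolding pick_def by (rule someI_ex)
    then have "\<bar>f x - f (pick (x 0))\<bar> \<le> C"
      using oscillation x(1) by simp
    then have "\<bar>f x\<bar> \<le> \<bar>f (pick (x 0))\<bar> + \<bar>C\<bar>"
      by linarith
    also have "\<bar>f (pick (x 0))\<bar> \<le> (\<Sum>e\<in>L. \<bar>f (pick e)\<bar>)"
      using assms(2) x(2) by (intro member_le_sum) auto
    finally show ?thesis
      unfolding B_def by simp
  qed
  moreover have "0 \<le> B"
    unfolding B_def by (simp add: sum_nonneg)
  ultimately show thesis
    using that by blast
qed

lemma birk_sum_bounded_on_letters:
  assumes bound: "\<And>x. adm_seq A x \<Longrightarrow> x 0 \<in> L \<Longrightarrow> \<bar>f x\<bar> \<le> B"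
    and "adm_seq A x" and "\<forall>i<n. x i \<in> L"
  shows "\<bar>birk_sum f n x\<bar> \<le> n * B"
proof -
  have "\<bar>birk_sum f n x\<bar> \<le> (\<Sum>j<n. \<bar>f ((shift ^^ j) x)\<bar>)"
    unfolding birk_sum_def by (rule sum_abs)
  also have "\<dots> \<le> (\<Sum>j<n. B)"
    using assms by (intro sum_mono bound) (auto simp: adm_seq_shift_funpow shift_funpow_apply)
  finally show ?thesis
    by simp
qed

lemma successively_closed_loop:
  assumes "w \<noteq> []" and "successively A w" and "adm_word A (last w # c @ [hd w])"
  shows "successively A (w @ c @ [hd w])"
proof -
  have "A (last w) (hd (c @ [hd w]))" "successively A (c @ [hd w])"
    using assms(3) unfolding adm_word_iff_successively successively_Cons by auto
  then show ?thesis
    using assms(1,2) by (simp add: successively_append_iff)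
qed

definition repetition :: "'a list \<Rightarrow> 'a list \<Rightarrow> nat \<Rightarrow> 'a list" where
  "repetition w c n = concat (replicate n (w @ c)) @ w"

lemma repetition_0 [simp]: "repetition w c 0 = w"
  by (simp add: repetition_def)

lemma repetition_Suc [simp]: "repetition w c (Suc n) = w @ c @ repetition w c n"
  by (simp add: repetition_def)

lemma hd_repetition: "w \<noteq> [] \<Longrightarrow> hd (repetition w c n) = hd w"
  by (cases n) simp_all

lemma length_repetition: "length (repetition w c n) = n * length w + n * length c + length w"
  by (simp add: repetition_def length_concat sum_list_replicate algebra_simps)

lemma repetition_in_words_before:
  assumes "w \<in> words_before A \<rho>" and "successively A (w @ c @ [hd w])"
  shows "repetition w c n \<in> words_before A \<rho>"
proof (induction n)
  case 0
  show ?case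
    using assms(1) by simp
next
  case (Suc n)
  let ?p = "repetition w c n"
  have "w \<noteq> []" "?p \<noteq> []" "adm_seq A (cat ?p \<rho>)"
    using assms(1) Suc.IH unfolding words_before_iff by auto
  moreover have "cat ?p \<rho> 0 = hd w"
    using \<open>w \<noteq> []\<close> \<open>?p \<noteq> []\<close> by (simp add: cat_0 hd_repetition)
  ultimately have "adm_seq A (cat (w @ c) (cat ?p \<rho>))"
    using assms(2) by (simp add: adm_seq_cat_iff)
  then show ?case
    using \<open>w \<noteq> []\<close> by (simp add: words_before_iff cat_append)
qed

lemma word_sum_repetition:
  fixes Dh B :: real
  assumes w: "w \<in> words_before A \<rho>" and loop: "successively A (w @ c @ [hd w])"
    and distortion: "bounded_distortion A f Dh"
    and letters: "\<And>x. adm_seq A x \<Longrightarrow> x 0 \<in> set c \<Longrightarrow> \<bar>f x\<bar> \<le> B"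
  shows "\<bar>word_sum f \<rho> (repetition w c n) - (n + 1) * word_sum f \<rho> w\<bar>
           \<le> n * (Dh + length c * B)"
proof (induction n)
  case 0
  show ?case
    by simp
next
  case (Suc n)
  let ?p = "repetition w c n"
  have "adm_seq A (cat w (cat c (cat ?p \<rho>)))"
    using repetition_in_words_before[OF w loop, of "Suc n"] by (simp add: words_before_iff cat_append)
  then have adm: "adm_seq A (cat c (cat ?p \<rho>))" "adm_seq A (cat w (cat (c @ ?p) \<rho>))"
    by (simp_all add: adm_seq_cat_iff cat_append)
  have "\<bar>birk_sum f (length w) (cat w (cat (c @ ?p) \<rho>)) - word_sum f \<rho> w\<bar> \<le> Dh"
    using distortion adm(2) w unfolding word_sum_def bounded_distortion_def
    by (auto simp: words_before_iff cat_nth)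
  moreover have "\<bar>birk_sum f (length c) (cat c (cat ?p \<rho>))\<bar> \<le> length c * B"
    using letters adm(1) by (rule birk_sum_bounded_on_letters) (auto simp: cat_nth)
  moreover have "word_sum f \<rho> (repetition w c (Suc n))
      = birk_sum f (length w) (cat w (cat (c @ ?p) \<rho>)) + birk_sum f (length c) (cat c (cat ?p \<rho>))
        + word_sum f \<rho> ?p"
    by (simp add: word_sum_append)
  ultimately show ?case
    using Suc.IH by (simp add: algebra_simps abs_le_iff)
qed

lemma replicated_word_exists:
  fixes Dh B :: real
  assumes w: "w \<in> words_before A \<rho>" and loop: "successively A (w @ c @ [hd w])"
    and distortion: "bounded_distortion A f Dh"
    and letters: "\<And>x. adm_seq A x \<Longrightarrow> x 0 \<in> set c \<Longrightarrow> \<bar>f x\<bar> \<le> B"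
    and "length c \<le> K" and "0 \<le> Dh" and "0 \<le> B"
  shows "\<exists>w'\<in>words_before A \<rho>. Suc p * length w \<le> length w' \<and> length w' \<le> Suc p * (length w + K) \<and>
           \<bar>word_sum f \<rho> w' - real (Suc p) * word_sum f \<rho> w\<bar> \<le> real (Suc p) * (Dh + K * B)"
proof
  define w' where "w' = repetition w c p"
  show "w' \<in> words_before A \<rho>"
    unfolding w'_def using w loop by (rule repetition_in_words_before)
  have len: "length w' = p * length w + p * length c + length w"
    unfolding w'_def by (rule length_repetition)
  then have "Suc p * length w \<le> length w'"
    by simp
  moreover have "length w' \<le> Suc p * (length w + K)"
  proof -
    have "p * length c \<le> p * K"
      using \<open>length c \<le> K\<close> by (rule mult_le_mono2)
    then have "length w' \<le> p * length w + p * K + length w"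
      using len by linarith
    also have "\<dots> \<le> Suc p * (length w + K)"
      by (simp add: algebra_simps)
    finally show ?thesis .
  qed
  moreover have "\<bar>word_sum f \<rho> w' - (real p + 1) * word_sum f \<rho> w\<bar> \<le> real p * (Dh + length c * B)"
    unfolding w'_def using w loop distortion letters by (rule word_sum_repetition)
  moreover have "real p * (Dh + length c * B) \<le> real (Suc p) * (Dh + K * B)"
  proof (rule mult_mono)
    show "Dh + length c * B \<le> Dh + K * B"
      using \<open>length c \<le> K\<close> \<open>0 \<le> B\<close> by (simp add: mult_right_mono)
  qed (use \<open>0 \<le> Dh\<close> \<open>0 \<le> B\<close> in auto)
  ultimately show "Suc p * length w \<le> length w' \<and> length w' \<le> Suc p * (length w + K) \<and>
      \<bar>word_sum f \<rho> w' - real (Suc p) * word_sum f \<rho> w\<bar> \<le> real (Suc p) * (Dh + K * B)"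
    by (simp add: add.commute)
qed

lemma words_before_lengths_exist:
  assumes "finitely_irreducible A" and "adm_seq A \<rho>" and "1 \<le> n"
  shows "\<exists>w\<in>words_before A \<rho>. length w = n"
proof -
  have predecessor: "\<exists>e. A e x" for x
  proof -
    obtain \<omega> where "adm_word A (undefined # \<omega> @ [x])"
      using assms(1) unfolding finitely_irreducible_def by blast
    then have "A (last (undefined # \<omega>)) x"
      by (simp add: adm_word_iff_successively successively_append_iff[of _ "undefined # \<omega>" "[x]", simplified])
    then show ?thesis ..
  qed
  have "\<exists>w\<in>words_before A \<rho>. length w = Suc m" for m
  proof (induction m)
    case 0
    obtain e where "A e (\<rho> 0)"
      using predecessor by blast
    then have "[e] \<in> words_before A \<rho>"
      using assms(2) by (simp add: words_before_iff adm_seq_cat_iff)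
    then show ?case
      by force
  next
    case (Suc m)
    then obtain w where w: "w \<in> words_before A \<rho>" "length w = Suc m"
      by blast
    obtain e where "A e (hd w)"
      using predecessor by blast
    then have "e # w \<in> words_before A \<rho>"
      using w(1) by (auto simp: words_before_iff adm_seq_cat_iff successively_Cons)
    then show ?case
      using w(2) by force
  qed
  then show ?thesis
    using \<open>1 \<le> n\<close> by (metis Suc_le_D One_nat_def)
qed

lemma words_before_replicable:
  assumes "finitely_irreducible A" and "holder_type A f" and "adm_seq A \<rho>"
  shows "\<exists>D K. replicable_words (words_before A \<rho>) length (word_sum f \<rho>) D K"
proof -
  obtain \<Omega> where "finite \<Omega>" and connect: "\<forall>e e'. \<exists>\<omega>\<in>\<Omega>. adm_word A (e # \<omega> @ [e'])"
    using assms(1) unfolding finitely_irreducible_def by blast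
  obtain Dh where distortion: "bounded_distortion A f Dh"
    using holder_type_bounded_distortion[OF assms(2)] by blast
  have "finite (\<Union> (set ` \<Omega>))"
    using \<open>finite \<Omega>\<close> by simp
  then obtain B where "0 \<le> B" and letters: "\<And>x. adm_seq A x \<Longrightarrow> x 0 \<in> \<Union> (set ` \<Omega>) \<Longrightarrow> \<bar>f x\<bar> \<le> B"
    using holder_type_bounded_on_letters[OF assms(2)] by blast
  have "\<bar>birk_sum f 0 \<rho> - birk_sum f 0 \<rho>\<bar> \<le> Dh"
    using distortion assms(3) unfolding bounded_distortion_def by blast
  then have "0 \<le> Dh"
    by simp
  define K where "K = Max (length ` \<Omega>)"
  have "replicable_words (words_before A \<rho>) length (word_sum f \<rho>) (Dh + K * B) K"
  proof
    show "\<exists>w\<in>words_before A \<rho>. length w = n" if "1 \<le> n" for n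
      using assms(1,3) that by (rule words_before_lengths_exist)
    show "0 \<le> Dh + K * B"
      using \<open>0 \<le> Dh\<close> \<open>0 \<le> B\<close> by simp
  next
    fix w and q :: nat
    assume w: "w \<in> words_before A \<rho>" and "1 \<le> q"
    obtain c where c: "c \<in> \<Omega>" "adm_word A (last w # c @ [hd w])"
      using connect by blast
    have "w \<noteq> []" "successively A w"
      using w by (auto simp: words_before_iff adm_seq_cat_iff successively_append_iff)
    then have loop: "successively A (w @ c @ [hd w])"
      using c(2) by (rule successively_closed_loop)
    have "length c \<le> K"
      unfolding K_def using \<open>finite \<Omega>\<close> c(1) by simp
    moreover have "\<bar>f x\<bar> \<le> B" if "adm_seq A x" "x 0 \<in> set c" for x
      using letters that c(1) by blast
    moreover obtain p where "q = Suc p"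
      using \<open>1 \<le> q\<close> by (cases q) auto
    ultimately show "\<exists>w'\<in>words_before A \<rho>. q * length w \<le> length w' \<and> length w' \<le> q * (length w + K) \<and>
        \<bar>word_sum f \<rho> w' - real q * word_sum f \<rho> w\<bar> \<le> real q * (Dh + K * B)"
      using replicated_word_exists[OF w loop distortion] \<open>0 \<le> Dh\<close> \<open>0 \<le> B\<close> by blast
  qed
  then show ?thesis
    by blast
qed

theorem mainTheorem2:
  fixes A :: "'e::countable \<Rightarrow> 'e \<Rightarrow> bool"
    and f :: "(nat \<Rightarrow> 'e) \<Rightarrow> real"
    and \<delta> :: real and \<rho> :: "nat \<Rightarrow> 'e"
  assumes "finitely_irreducible A"
    and "strongly_regular A f" and "holder_type A f"
    and "\<delta> > 0" and "pressure A (\<lambda>x. \<delta> * f x) = 0"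
    and "adm_seq A \<rho>"
  shows "(\<exists>L::ereal. ((\<lambda>T. m_fun A f \<rho> T / ereal T) \<longlongrightarrow> L) at_top) \<and>
         (\<exists>L::ereal. ((\<lambda>T. M_fun A f \<rho> T / ereal T) \<longlongrightarrow> L) at_top)"
proof -
  obtain D K where "replicable_words (words_before A \<rho>) length (word_sum f \<rho>) D K"
    using words_before_replicable[OF assms(1,3,6)] by blast
  then interpret replicable_words "words_before A \<rho>" length "word_sum f \<rho>" D K .
  have "m_fun A f \<rho> = m" and "M_fun A f \<rho> = M"
    by (simp_all add: fun_eq_iff m_fun_def m_def M_fun_def M_def word_sum_def)
  then show ?thesis
    using m_ratio_converges M_ratio_converges by simp
qed

end
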